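(* Let $h,v$ be permutations of $\Lambda=\{1,\dots,d\}$, $M\ge0$ an integer, and let $(\mu_n,\sigma_n)_{n\in\mathbb{Z}}\in(\Lambda\times\{L,R\})^{\mathbb{Z}}$ be a walk on $\Gamma^M$. Then for every finite word $w$ occurring in $(\mu_n,\sigma_n)$, the sets $A(w)$ and $D(w)$ each contain at most two letters, $A(w)$ is a $\pi_1^M$-interval, and $D(w)$ is a $\pi_0$-interval.
   Context: $\Gamma^M$ is the directed multigraph on vertex set $\Lambda$ where each vertex $\lambda$ has an edge labeled $L$ to $vh^M(\lambda)$ and an edge labeled $R$ to $vh^{M+1}(\lambda)$; a walk on $\Gamma^M$ is a sequence $(\mu_n,\sigma_n)$ with $\mu_{n+1}=vh^M(\mu_n)$ if $\sigma_n=L$ and $\mu_{n+1}=vh^{M+1}(\mu_n)$ if $\sigma_n=R$. For a finite word $w$ occurring in the sequence, $A(w)$ is the set of letters $a\in\Lambda\times\{L,R\}$ such that $aw$ occurs, and $D(w)$ the set of letters $b$ such that $wb$ occurs. $\pi_0,\pi_1^M:\Lambda\times\{L,R\}\to\{1,\dots,2d\}$ are $\pi_0(\lambda,L)=2\lambda-1$, $\pi_0(\lambda,R)=2\lambda$, $\pi_1^M(\lambda,L)=2vh^M(\lambda)$, $\pi_1^M(\lambda,R)=2vh^{M+1}(\lambda)-1$. For a bijection $\pi$, a $\pi$-interval is a set of letters whose $\pi$-values form a set of consecutive integers. *)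

theory Defs
  imports "HOL-Combinatorics.Permutations"
begin

datatype side = L | R

type_synonym letter = "nat \<times> side"

definition vh_pow :: "(nat \<Rightarrow> nat) \<Rightarrow> (nat \<Rightarrow> nat) \<Rightarrow> nat \<Rightarrow> nat \<Rightarrow> nat" where
  "vh_pow h v M = (v \<circ> h) ^^ M"

definition is_walk :: "nat \<Rightarrow> (nat \<Rightarrow> nat) \<Rightarrow> (nat \<Rightarrow> nat) \<Rightarrow> nat \<Rightarrow> (int \<Rightarrow> nat) \<Rightarrow> (int \<Rightarrow> side) \<Rightarrow> bool" where
  "is_walk d h v M \<mu> \<sigma> \<longleftrightarrow>
     (\<forall>n. \<mu> n \<in> {1..d}) \<and>
     (\<forall>n. (\<sigma> n = L \<longrightarrow> \<mu> (n+1) = vh_pow h v M (\<mu> n)) \<and>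
          (\<sigma> n = R \<longrightarrow> \<mu> (n+1) = vh_pow h v (M+1) (\<mu> n)))"

definition seq_letter :: "(int \<Rightarrow> nat) \<Rightarrow> (int \<Rightarrow> side) \<Rightarrow> int \<Rightarrow> letter" where
  "seq_letter \<mu> \<sigma> n = (\<mu> n, \<sigma> n)"

definition occurs :: "(int \<Rightarrow> nat) \<Rightarrow> (int \<Rightarrow> side) \<Rightarrow> letter list \<Rightarrow> bool" where
  "occurs \<mu> \<sigma> w \<longleftrightarrow> (\<exists>k::int. \<forall>i < length w. w ! i = seq_letter \<mu> \<sigma> (k + int i))"

definition letters :: "nat \<Rightarrow> letter set" where
  "letters d = {1..d} \<times> UNIV"

definition A_set :: "nat \<Rightarrow> (int \<Rightarrow> nat) \<Rightarrow> (int \<Rightarrow> side) \<Rightarrow> letter list \<Rightarrow> letter set" where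
  "A_set d \<mu> \<sigma> w = {a \<in> letters d. occurs \<mu> \<sigma> (a # w)}"

definition D_set :: "nat \<Rightarrow> (int \<Rightarrow> nat) \<Rightarrow> (int \<Rightarrow> side) \<Rightarrow> letter list \<Rightarrow> letter set" where
  "D_set d \<mu> \<sigma> w = {b \<in> letters d. occurs \<mu> \<sigma> (w @ [b])}"

fun pi0 :: "letter \<Rightarrow> nat" where
  "pi0 (lam, L) = 2 * lam - 1"
| "pi0 (lam, R) = 2 * lam"

fun pi1 :: "(nat \<Rightarrow> nat) \<Rightarrow> (nat \<Rightarrow> nat) \<Rightarrow> nat \<Rightarrow> letter \<Rightarrow> nat" where
  "pi1 h v M (lam, L) = 2 * vh_pow h v M lam"
| "pi1 h v M (lam, R) = 2 * vh_pow h v (M+1) lam - 1"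

definition pi_interval :: "(letter \<Rightarrow> nat) \<Rightarrow> letter set \<Rightarrow> bool" where
  "pi_interval \<pi> S \<longleftrightarrow> (\<exists>a b. \<pi> ` S = {a..b})"

end

theory Submission
  imports Defs
begin

text \<open>Consecutive letters of a walk are linked by the edge map: the first letter (\<lambda>, s) of a
  two-letter factor determines the vertex of the second one.  Hence A(w) lies in a fibre of this
  map, which has at most one letter per side because vh^M and vh^(M+1) are permutations, while
  D(w) consists of letters over a single vertex.  In both cases the letters are sent by
  \<pi>1 resp. \<pi>0 into a pair {2x - 1, 2x}, which is an interval.
  Neither argument uses that w itself occurs.\<close>

fun walk_target :: "(nat \<Rightarrow> nat) \<Rightarrow> (nat \<Rightarrow> nat) \<Rightarrow> nat \<Rightarrow> letter \<Rightarrow> nat" where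
  "walk_target h v M (lam, L) = vh_pow h v M lam"
| "walk_target h v M (lam, R) = vh_pow h v (M+1) lam"

lemma vh_pow_permutes:
  assumes "h permutes S" and "v permutes S"
  shows "vh_pow h v n permutes S"
  unfolding vh_pow_def
  by (induction n) (use assms in \<open>simp_all only: funpow.simps permutes_id permutes_compose\<close>)

lemma walk_target_fibre_subset:
  assumes "h permutes S" and "v permutes S"
  shows "{a. walk_target h v M a = m}
    \<subseteq> {(inv (vh_pow h v M) m, L), (inv (vh_pow h v (M+1)) m, R)}"
proof
  fix a assume "a \<in> {a. walk_target h v M a = m}"
  moreover obtain lam s where "a = (lam, s)"
    by fastforce
  ultimately show "a \<in> {(inv (vh_pow h v M) m, L), (inv (vh_pow h v (M+1)) m, R)}"
    using permutes_inverses(2)[OF vh_pow_permutes[OF assms]] by (cases s) auto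
qed

lemma pi1_in_pair: "pi1 h v M a \<in> {2 * walk_target h v M a - 1, 2 * walk_target h v M a}"
  by (induction h v M a rule: walk_target.induct) auto

lemma interval_if_subset_consecutive_pair:
  assumes "T \<subseteq> {2 * x - 1, 2 * (x::nat)}"
  shows "\<exists>a b. T = {a..b}"
proof -
  have "T = {} \<or> T = {2*x - 1} \<or> T = {2*x} \<or> T = {2*x - 1, 2*x}"
    using assms by blast
  moreover have "{2*x - 1, 2*x} = {2*x - 1..2*x}"
    by (cases x) (auto simp: atLeastAtMostSuc_conv)
  moreover have "{} = {1..0::nat}"
    by simp
  ultimately show ?thesis
    by (metis atLeastAtMost_singleton)
qed

lemma is_walk_step:
  assumes "is_walk d h v M \<mu> \<sigma>"
  shows "\<mu> (n + 1) = walk_target h v M (seq_letter \<mu> \<sigma> n)"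
  using assms unfolding is_walk_def seq_letter_def by (cases "\<sigma> n") auto

lemma occurs_appendD:
  assumes "occurs \<mu> \<sigma> (u @ w)"
  shows "occurs \<mu> \<sigma> u" and "occurs \<mu> \<sigma> w"
proof -
  obtain k where k: "\<forall>i < length (u @ w). (u @ w) ! i = seq_letter \<mu> \<sigma> (k + int i)"
    using assms unfolding occurs_def by blast
  have "u ! i = seq_letter \<mu> \<sigma> (k + int i)" if "i < length u" for i
    using k[rule_format, of i] that by (simp add: nth_append)
  then show "occurs \<mu> \<sigma> u"
    unfolding occurs_def by blast
  have "w ! i = seq_letter \<mu> \<sigma> ((k + int (length u)) + int i)" if "i < length w" for i
    using k[rule_format, of "length u + i"] that by (simp add: nth_append add.assoc)
  then show "occurs \<mu> \<sigma> w"
    unfolding occurs_def by blast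
qed

lemma occurs_two_letters:
  assumes "is_walk d h v M \<mu> \<sigma>" and "occurs \<mu> \<sigma> [a, b]"
  shows "fst b = walk_target h v M a"
proof -
  obtain k where "a = seq_letter \<mu> \<sigma> k" and "b = seq_letter \<mu> \<sigma> (k + 1)"
    using assms(2) unfolding occurs_def by force
  then show ?thesis
    using is_walk_step[OF assms(1)] by (simp add: seq_letter_def)
qed

lemma A_set_subset_fibre:
  assumes "is_walk d h v M \<mu> \<sigma>" and "w \<noteq> []"
  shows "A_set d \<mu> \<sigma> w \<subseteq> {a. walk_target h v M a = fst (hd w)}"
proof
  fix a assume "a \<in> A_set d \<mu> \<sigma> w"
  moreover obtain b w' where "w = b # w'"
    using assms(2) by (cases w) auto
  ultimately have "occurs \<mu> \<sigma> ([a, b] @ w')"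
    unfolding A_set_def by simp
  then show "a \<in> {a. walk_target h v M a = fst (hd w)}"
    using occurs_two_letters[OF assms(1) occurs_appendD(1)] \<open>w = b # w'\<close> by simp
qed

lemma D_set_subset_vertex:
  assumes "is_walk d h v M \<mu> \<sigma>" and "w \<noteq> []"
  shows "D_set d \<mu> \<sigma> w \<subseteq> {(walk_target h v M (last w), L), (walk_target h v M (last w), R)}"
proof
  fix b assume "b \<in> D_set d \<mu> \<sigma> w"
  moreover have "w @ [b] = butlast w @ [last w, b]"
    using assms(2) by (induction w rule: rev_induct) auto
  ultimately have "occurs \<mu> \<sigma> (butlast w @ [last w, b])"
    unfolding D_set_def by simp
  then have "fst b = walk_target h v M (last w)"
    using occurs_two_letters[OF assms(1) occurs_appendD(2)] by blast
  then show "b \<in> {(walk_target h v M (last w), L), (walk_target h v M (last w), R)}"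
    by (cases b; cases "snd b") auto
qed

theorem lemma5p4:
  fixes d M :: nat and h v :: "nat \<Rightarrow> nat"
    and \<mu> :: "int \<Rightarrow> nat" and \<sigma> :: "int \<Rightarrow> side" and w :: "letter list"
  assumes "h permutes {1..d}" and "v permutes {1..d}"
    and "is_walk d h v M \<mu> \<sigma>"
    and "w \<noteq> []" and "occurs \<mu> \<sigma> w"
  shows "card (A_set d \<mu> \<sigma> w) \<le> 2 \<and> card (D_set d \<mu> \<sigma> w) \<le> 2
    \<and> pi_interval (pi1 h v M) (A_set d \<mu> \<sigma> w)
    \<and> pi_interval pi0 (D_set d \<mu> \<sigma> w)"
proof -
  let ?m = "fst (hd w)" and ?x = "walk_target h v M (last w)"
  have A_fibre: "A_set d \<mu> \<sigma> w \<subseteq> {a. walk_target h v M a = ?m}"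
    using A_set_subset_fibre[OF assms(3,4)] .
  have D_pair: "D_set d \<mu> \<sigma> w \<subseteq> {(?x, L), (?x, R)}"
    using D_set_subset_vertex[OF assms(3,4)] .
  have "card (A_set d \<mu> \<sigma> w) \<le> 2"
    using card_mono[OF _ subset_trans[OF A_fibre walk_target_fibre_subset[OF assms(1,2)]]]
    by (simp add: card_insert_le_m1 le_trans)
  moreover have "card (D_set d \<mu> \<sigma> w) \<le> 2"
    using card_mono[OF _ D_pair] by (simp add: card_insert_le_m1)
  moreover have "pi1 h v M ` A_set d \<mu> \<sigma> w \<subseteq> {2 * ?m - 1, 2 * ?m}"
  proof (rule image_subsetI)
    fix a assume "a \<in> A_set d \<mu> \<sigma> w"
    then show "pi1 h v M a \<in> {2 * ?m - 1, 2 * ?m}"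
      using A_fibre pi1_in_pair[of h v M a] by auto
  qed
  moreover have "pi0 ` D_set d \<mu> \<sigma> w \<subseteq> {2 * ?x - 1, 2 * ?x}"
    using D_pair by auto
  ultimately show ?thesis
    unfolding pi_interval_def using interval_if_subset_consecutive_pair by blast
qed

end
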